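(* Let $\mathcal{H}$ be a complex separable Hilbert space and $\mathcal{E}(\mathcal{H})$ its set of effects. For $A\in\mathcal{E}(\mathcal{H})$, with $A'=I-A$, put $$X(A):=2\|A\|\,\|A'\|-\bigl(\|A\|+\|A'\|-1\bigr),$$ $$Y(A):=2\bigl(\|A\|\,\|A'\|-\|AA'\|\bigr)-\Bigl[\bigl(\|A\|+\|A'\|-1\bigr)-\bigl(\|AA'\|+\|I-AA'\|-1\bigr)\Bigr],$$ and $$\mathcal{S}_2(A):=X(A)-\sqrt{X(A)^2-Y(A)}.$$ Then $\mathcal{S}_2$ is a well-defined real-valued function on $\mathcal{E}(\mathcal{H})$ and is a sharpness measure.
   Context: An effect is a selfadjoint bounded operator $A$ on $\mathcal{H}$ with $\mathbb{O}\le A\le I$. An effect is trivial if $A=\lambda I$, $\lambda\in[0,1]$; a nontrivial projection is a projection other than $\mathbb{O},I$. Norms are operator norms. A function $\mathcal{S}:\mathcal{E}(\mathcal{H})\to\mathbb{R}$ is a sharpness measure if: (S1) $0\le\mathcal{S}(A)\le1$; (S2) $\mathcal{S}(A)=0$ iff $A$ is trivial; (S3) $\mathcal{S}(A)=1$ iff $A$ is a nontrivial projection; (S4) $\mathcal{S}(A')=\mathcal{S}(A)$; (S5) $\mathcal{S}(CAC^{-1})=\mathcal{S}(A)$ for every invertible bounded $C$ such that $CAC^{-1}$ is an effect; (S6) $A\mapsto\mathcal{S}(A)$ is operator-norm continuous. *)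

theory Defs
  imports "HOL-Analysis.Analysis"
begin

text \<open>The inner product is conjugate-linear in the first and linear in the second argument;
  the norm is the one induced by the inner product, and real scalar multiplication
  is the restriction of complex scalar multiplication.\<close>

class complex_inner = real_normed_vector +
  fixes scaleC :: "complex \<Rightarrow> 'a \<Rightarrow> 'a"
    and cinner :: "'a \<Rightarrow> 'a \<Rightarrow> complex"
  assumes scaleC_add_right: "scaleC a (x + y) = scaleC a x + scaleC a y"
    and scaleC_add_left: "scaleC (a + b) x = scaleC a x + scaleC b x"
    and scaleC_scaleC: "scaleC a (scaleC b x) = scaleC (a * b) x"
    and scaleC_one: "scaleC 1 x = x"
    and scaleR_scaleC: "scaleR r x = scaleC (complex_of_real r) x"
    and cinner_add_right: "cinner x (y + z) = cinner x y + cinner x z"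
    and cinner_scaleC_right: "cinner x (scaleC a y) = a * cinner x y"
    and cinner_commute: "cinner y x = cnj (cinner x y)"
    and cinner_self_norm: "cinner x x = complex_of_real ((norm x)\<^sup>2)"

definition separable_hspace :: "'a::topological_space itself \<Rightarrow> bool" where
  "separable_hspace _ \<longleftrightarrow> (\<exists>D::'a set. countable D \<and> closure D = UNIV)"

text \<open>Bounded (complex-)linear operators on H, represented as functions.\<close>

definition bounded_clinear :: "('a::complex_inner \<Rightarrow> 'a) \<Rightarrow> bool" where
  "bounded_clinear A \<longleftrightarrow> bounded_linear A \<and> (\<forall>c x. A (scaleC c x) = scaleC c (A x))"

definition selfadjoint :: "('a::complex_inner \<Rightarrow> 'a) \<Rightarrow> bool" where
  "selfadjoint A \<longleftrightarrow> bounded_clinear A \<and> (\<forall>x y. cinner (A x) y = cinner x (A y))"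

definition is_effect :: "('a::complex_inner \<Rightarrow> 'a) \<Rightarrow> bool" where
  "is_effect A \<longleftrightarrow> selfadjoint A \<and>
     (\<forall>x. 0 \<le> Re (cinner x (A x)) \<and> Re (cinner x (A x)) \<le> Re (cinner x x))"

definition effects :: "('a::complex_inner \<Rightarrow> 'a) set" where
  "effects = {A. is_effect A}"

definition complement_op :: "('a::complex_inner \<Rightarrow> 'a) \<Rightarrow> ('a \<Rightarrow> 'a)" where
  "complement_op A = (\<lambda>x. x - A x)"

definition trivial_effect :: "('a::complex_inner \<Rightarrow> 'a) \<Rightarrow> bool" where
  "trivial_effect A \<longleftrightarrow> (\<exists>l::real. 0 \<le> l \<and> l \<le> 1 \<and> A = (\<lambda>x. scaleR l x))"

definition is_projection :: "('a::complex_inner \<Rightarrow> 'a) \<Rightarrow> bool" where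
  "is_projection P \<longleftrightarrow> selfadjoint P \<and> P \<circ> P = P"

definition nontrivial_projection :: "('a::complex_inner \<Rightarrow> 'a) \<Rightarrow> bool" where
  "nontrivial_projection P \<longleftrightarrow> is_projection P \<and> P \<noteq> (\<lambda>x. 0) \<and> P \<noteq> id"

definition invertible_op :: "('a::complex_inner \<Rightarrow> 'a) \<Rightarrow> bool" where
  "invertible_op C \<longleftrightarrow> bounded_clinear C \<and> bij C \<and> bounded_clinear (inv C)"

definition sharpness_measure :: "(('a::complex_inner \<Rightarrow> 'a) \<Rightarrow> real) \<Rightarrow> bool" where
  "sharpness_measure S \<longleftrightarrow>
     (\<forall>A\<in>effects. 0 \<le> S A \<and> S A \<le> 1) \<and>
     (\<forall>A\<in>effects. S A = 0 \<longleftrightarrow> trivial_effect A) \<and>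
     (\<forall>A\<in>effects. S A = 1 \<longleftrightarrow> nontrivial_projection A) \<and>
     (\<forall>A\<in>effects. S (complement_op A) = S A) \<and>
     (\<forall>A\<in>effects. \<forall>C. invertible_op C \<and> C \<circ> A \<circ> inv C \<in> effects
          \<longrightarrow> S (C \<circ> A \<circ> inv C) = S A) \<and>
     (\<forall>A\<in>effects. \<forall>e>0. \<exists>d>0. \<forall>B\<in>effects.
          onorm (\<lambda>x. B x - A x) < d \<longrightarrow> \<bar>S B - S A\<bar> < e)"

definition X_fun :: "('a::complex_inner \<Rightarrow> 'a) \<Rightarrow> real" where
  "X_fun A = 2 * onorm A * onorm (complement_op A) - (onorm A + onorm (complement_op A) - 1)"

definition Y_fun :: "('a::complex_inner \<Rightarrow> 'a) \<Rightarrow> real" where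
  "Y_fun A =
     2 * (onorm A * onorm (complement_op A) - onorm (A \<circ> complement_op A))
     - ((onorm A + onorm (complement_op A) - 1)
        - (onorm (A \<circ> complement_op A) + onorm (complement_op (A \<circ> complement_op A)) - 1))"

definition S2 :: "('a::complex_inner \<Rightarrow> 'a) \<Rightarrow> real" where
  "S2 A = X_fun A - sqrt ((X_fun A)\<^sup>2 - Y_fun A)"

end

theory Submission
  imports Defs
begin

text \<open>
  For an effect A on a nonzero space put M = ||A|| and m = 1 - ||I - A||, the supremum and
  infimum of <u, A u> over unit vectors u; M is an approximate eigenvalue of A. Since
  A A' = f(A) with f t = t (1 - t), the same quantities N = ||A A'|| and n = 1 - ||I - A A'||
  of A A' satisfy max (f m) (f M) \<le> N \<le> max f[m, M] and n = min (f m) (f M): approximate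
  eigenvectors of A for m and M give the bounds towards f m and f M, and
  <u, A A' u> = <u, A u> - ||A u||^2 together with (A - m)(M - A) \<ge> 0 gives the others.
  In these variables X = M + m - 2 M m and X^2 - Y = X^2 - X + N + n, and the constraints
  force 0 \<le> Y \<le> X^2, with Y = 0 exactly when m = M (A is a multiple of I) and S2 = 1
  exactly when m = 0, M = 1 and N = 0 (A is a nontrivial projection). Similarity invariance
  holds because approximate eigenvalues are preserved by similarities, and continuity because
  M, m, N, n are Lipschitz in A.
\<close>

section \<open>The real part of the inner product\<close>

definition re_inner :: "'a::complex_inner \<Rightarrow> 'a \<Rightarrow> real" where
  "re_inner x y = Re (cinner x y)"

lemma re_inner_add_right: "re_inner x (y + z) = re_inner x y + re_inner x z"
  by (simp add: re_inner_def cinner_add_right)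

lemma re_inner_commute: "re_inner y x = re_inner x (y::'a::complex_inner)"
  unfolding re_inner_def by (subst cinner_commute) simp

lemma re_inner_add_left: "re_inner (x + y) z = re_inner x z + re_inner y (z::'a::complex_inner)"
  by (metis re_inner_add_right re_inner_commute)

lemma re_inner_scaleR_right: "re_inner x (r *\<^sub>R y) = r * re_inner x (y::'a::complex_inner)"
  by (simp add: re_inner_def scaleR_scaleC cinner_scaleC_right)

lemma re_inner_scaleR_left: "re_inner (r *\<^sub>R x) y = r * re_inner x (y::'a::complex_inner)"
  by (metis re_inner_scaleR_right re_inner_commute)

lemma re_inner_minus_right: "re_inner x (- y) = - re_inner x (y::'a::complex_inner)"
  using re_inner_scaleR_right[of x "-1" y] by simp

lemma re_inner_diff_right: "re_inner x (y - z) = re_inner x y - re_inner x (z::'a::complex_inner)"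
  by (simp only: diff_conv_add_uminus re_inner_add_right re_inner_minus_right)

lemma re_inner_diff_left: "re_inner (x - y) z = re_inner x z - re_inner y (z::'a::complex_inner)"
  by (metis re_inner_diff_right re_inner_commute)

lemma re_inner_self: "re_inner x x = (norm (x::'a::complex_inner))\<^sup>2"
  by (simp add: re_inner_def cinner_self_norm)

lemma re_inner_le_norm: "re_inner x y \<le> norm x * norm (y::'a::complex_inner)"
proof -
  have "(norm (x + y))\<^sup>2 = (norm x)\<^sup>2 + 2 * re_inner x y + (norm y)\<^sup>2"
    by (simp flip: re_inner_self add: re_inner_add_left re_inner_add_right re_inner_commute[of y x])
  moreover have "(norm (x + y))\<^sup>2 \<le> (norm x + norm y)\<^sup>2"
    by (simp add: norm_triangle_ineq power_mono)
  ultimately show ?thesis by (simp add: power2_sum)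
qed

lemma abs_re_inner_le_norm: "\<bar>re_inner x y\<bar> \<le> norm x * norm (y::'a::complex_inner)"
  using re_inner_le_norm[of x y] re_inner_le_norm[of x "-y"] by (simp add: re_inner_minus_right)

lemma norm_diff_scaleR_square:
  "(norm (y - l *\<^sub>R u))\<^sup>2 = (norm y)\<^sup>2 - 2 * l * re_inner u y + l\<^sup>2 * (norm (u::'a::complex_inner))\<^sup>2"
proof -
  have "(norm (y - l *\<^sub>R u))\<^sup>2 = re_inner (y - l *\<^sub>R u) (y - l *\<^sub>R u)"
    by (simp add: re_inner_self)
  also have "\<dots> = re_inner y y - 2 * l * re_inner u y + l\<^sup>2 * re_inner u u"
    by (simp add: re_inner_diff_left re_inner_diff_right re_inner_scaleR_left
        re_inner_scaleR_right re_inner_commute[of y u] power2_eq_square algebra_simps)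
  finally show ?thesis by (simp add: re_inner_self)
qed

lemma scaleC_diff: "scaleC c (x - y) = scaleC c x - scaleC c (y::'a::complex_inner)"
  by (metis add_diff_cancel diff_add_cancel scaleC_add_right)

lemma cinner_diff_right: "cinner x (y - z) = cinner x y - cinner x (z::'a::complex_inner)"
  by (metis add_diff_cancel diff_add_cancel cinner_add_right)

lemma cinner_diff_left: "cinner (y - z) x = cinner y x - cinner z (x::'a::complex_inner)"
  by (metis cinner_commute cinner_diff_right complex_cnj_diff)

section \<open>Effects\<close>

lemma positive_operator_norm_sq_le:
  fixes B :: "'a::complex_inner \<Rightarrow> 'a"
  assumes "bounded_linear B"
    and symmetric: "\<And>x y. re_inner (B x) y = re_inner x (B y)"
    and nonneg: "\<And>y. 0 \<le> re_inner y (B y)"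
    and bounded: "\<And>y. re_inner y (B y) \<le> d * (norm y)\<^sup>2"
    and "0 \<le> d"
  shows "(norm (B x))\<^sup>2 \<le> d * re_inner x (B x)"
proof -
  interpret B: bounded_linear B by fact
  define b where "b = (norm (B x))\<^sup>2"
  define t where "t = re_inner x (B x)"
  \<comment> \<open>Positivity of B at x - l B x, then l = 1/d.\<close>
  have quadratic: "0 \<le> t - 2 * l * b + l\<^sup>2 * (d * b)" for l
  proof -
    have "0 \<le> re_inner (x - l *\<^sub>R B x) (B (x - l *\<^sub>R B x))" by (rule nonneg)
    also have "\<dots> = t - 2 * l * b + l\<^sup>2 * re_inner (B x) (B (B x))"
    proof -
      have "re_inner x (B (B x)) = b" "re_inner (B x) x = t"
        using symmetric[of x "B x"] by (simp_all add: b_def t_def re_inner_self re_inner_commute)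
      then show ?thesis
        by (simp add: B.diff B.scaleR re_inner_diff_left re_inner_diff_right re_inner_scaleR_left
            re_inner_scaleR_right re_inner_self t_def b_def power2_eq_square algebra_simps)
    qed
    also have "re_inner (B x) (B (B x)) \<le> d * b" using bounded[of "B x"] by (simp add: b_def)
    finally show ?thesis by (simp add: mult_left_mono)
  qed
  show ?thesis
  proof (cases "d = 0")
    case True
    have "t \<le> 0" using bounded[of x] True by (simp add: t_def)
    with quadratic[of 1] True have "b \<le> 0" by simp
    with True show ?thesis by (simp add: b_def)
  next
    case False
    with \<open>0 \<le> d\<close> have "0 < d" by simp
    from quadratic[of "1 / d"] this have "b / d \<le> t" by (simp add: power2_eq_square field_simps)
    with \<open>0 < d\<close> show ?thesis by (simp add: b_def t_def divide_le_eq mult.commute)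
  qed
qed

lemma is_effect_iff_re_inner:
  "is_effect A \<longleftrightarrow> selfadjoint A \<and> (\<forall>x. 0 \<le> re_inner x (A x) \<and> re_inner x (A x) \<le> (norm x)\<^sup>2)"
  unfolding is_effect_def by (simp add: re_inner_def[symmetric] re_inner_self)

lemma selfadjoint_bounded_linear: "selfadjoint A \<Longrightarrow> bounded_linear A"
  by (simp add: selfadjoint_def bounded_clinear_def)

lemma effect_bounded_linear: "is_effect A \<Longrightarrow> bounded_linear A"
  by (simp add: is_effect_def selfadjoint_bounded_linear)

lemma effect_symmetric: "is_effect A \<Longrightarrow> re_inner (A x) y = re_inner x (A y)"
  by (simp add: is_effect_def selfadjoint_def re_inner_def)

lemma effect_diff: "is_effect A \<Longrightarrow> A (x - y) = A x - A y"
  by (simp add: linear_diff bounded_linear.linear effect_bounded_linear)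

lemma effect_re_inner_nonneg: "is_effect A \<Longrightarrow> 0 \<le> re_inner x (A x)"
  by (simp add: is_effect_iff_re_inner)

lemma effect_re_inner_le: "is_effect A \<Longrightarrow> re_inner x (A x) \<le> (norm x)\<^sup>2"
  by (simp add: is_effect_iff_re_inner)

lemma effect_norm_sq_le_re_inner:
  assumes "is_effect A" and "0 \<le> d" and "\<And>y. re_inner y (A y) \<le> d * (norm y)\<^sup>2"
  shows "(norm (A x))\<^sup>2 \<le> d * re_inner x (A x)"
  using assms by (intro positive_operator_norm_sq_le)
    (simp_all add: effect_bounded_linear effect_symmetric effect_re_inner_nonneg)

lemma effect_norm_sq_le: "is_effect A \<Longrightarrow> (norm (A x))\<^sup>2 \<le> re_inner x (A x)"
  using effect_norm_sq_le_re_inner[of A 1 x] effect_re_inner_le[of A] by simp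

lemma effect_norm_le: "is_effect A \<Longrightarrow> norm (A x) \<le> norm x"
  using effect_norm_sq_le[of A x] effect_re_inner_le[of A x] by (simp add: power2_le_imp_le)

lemma effect_onorm_le_1: "is_effect A \<Longrightarrow> onorm A \<le> 1"
  by (rule onorm_bound) (simp_all add: effect_norm_le)

lemma effect_onorm_nonneg: "is_effect A \<Longrightarrow> 0 \<le> onorm A"
  by (simp add: effect_bounded_linear onorm_pos_le)

lemma effect_re_inner_le_onorm: "is_effect A \<Longrightarrow> re_inner x (A x) \<le> onorm A * (norm x)\<^sup>2"
proof -
  assume "is_effect A"
  have "re_inner x (A x) \<le> norm x * norm (A x)" by (rule re_inner_le_norm)
  also have "\<dots> \<le> norm x * (onorm A * norm x)"
    by (simp add: mult_left_mono onorm effect_bounded_linear \<open>is_effect A\<close>)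
  finally show ?thesis by (simp add: power2_eq_square algebra_simps)
qed

lemma effect_norm_sq_le_onorm: "is_effect A \<Longrightarrow> (norm (A x))\<^sup>2 \<le> onorm A * re_inner x (A x)"
  by (simp add: effect_norm_sq_le_re_inner effect_onorm_nonneg effect_re_inner_le_onorm)

lemma selfadjoint_complement: "selfadjoint A \<Longrightarrow> selfadjoint (complement_op A)"
  using bounded_linear_sub[OF bounded_linear_ident selfadjoint_bounded_linear[of A]]
  unfolding selfadjoint_def bounded_clinear_def complement_op_def
  by (simp add: scaleC_diff cinner_diff_left cinner_diff_right)

lemma effect_complement: "is_effect A \<Longrightarrow> is_effect (complement_op A)"
  unfolding is_effect_iff_re_inner using selfadjoint_complement[of A]
  by (auto simp: complement_op_def re_inner_diff_right re_inner_self)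

lemma complement_complement [simp]: "complement_op (complement_op A) = A"
  by (simp add: complement_op_def)

lemma effect_complement_commute: "is_effect A \<Longrightarrow> complement_op A \<circ> A = A \<circ> complement_op A"
  by (auto simp: fun_eq_iff complement_op_def effect_diff)

lemma re_inner_effect_mult_complement:
  "is_effect A \<Longrightarrow> re_inner x ((A \<circ> complement_op A) x) = re_inner x (A x) - (norm (A x))\<^sup>2"
  using effect_symmetric[of A x "A x"]
  by (simp add: complement_op_def effect_diff re_inner_diff_right re_inner_self)

lemma effect_mult_complement: "is_effect A \<Longrightarrow> is_effect (A \<circ> complement_op A)"
proof -
  assume A: "is_effect A"
  have sa: "selfadjoint A" "selfadjoint (complement_op A)"
    using A by (simp_all add: is_effect_def selfadjoint_complement)
  have "A (complement_op A x) = complement_op A (A x)" for x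
    using effect_complement_commute[OF A] by (metis comp_apply)
  with sa have "selfadjoint (A \<circ> complement_op A)"
    by (auto simp: selfadjoint_def bounded_clinear_def o_def intro: bounded_linear_compose)
  moreover have "0 \<le> re_inner x ((A \<circ> complement_op A) x)" for x
    using effect_norm_sq_le[OF A, of x] re_inner_effect_mult_complement[OF A, of x] by linarith
  moreover have "re_inner x ((A \<circ> complement_op A) x) \<le> (norm x)\<^sup>2" for x
    using effect_re_inner_le[OF A, of x] re_inner_effect_mult_complement[OF A, of x]
      zero_le_power2[of "norm (A x)"] by linarith
  ultimately show ?thesis by (simp add: is_effect_iff_re_inner)
qed

section \<open>Approximate eigenvalues and the numerical range\<close>

text \<open>For an effect on a nonzero space, onorm A and numrange_inf A are the supremum and the
  infimum of re_inner u (A u) over unit vectors u.\<close>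

definition numrange_inf :: "('a::complex_inner \<Rightarrow> 'a) \<Rightarrow> real" where
  "numrange_inf A = 1 - onorm (complement_op A)"

lemma effect_numrange_inf_le_re_inner:
  "is_effect A \<Longrightarrow> numrange_inf A * (norm x)\<^sup>2 \<le> re_inner x (A x)"
  using effect_re_inner_le_onorm[OF effect_complement, of A x]
  by (simp add: numrange_inf_def complement_op_def re_inner_diff_right re_inner_self algebra_simps)

lemma effect_numrange_inf_nonneg: "is_effect A \<Longrightarrow> 0 \<le> numrange_inf A"
  using effect_onorm_le_1[OF effect_complement] by (simp add: numrange_inf_def)

lemma effect_numrange_inf_le_1: "is_effect A \<Longrightarrow> numrange_inf A \<le> 1"
  using effect_onorm_nonneg[OF effect_complement] by (simp add: numrange_inf_def)

lemma effect_re_inner_unit_between: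
  "is_effect A \<Longrightarrow> norm u = 1 \<Longrightarrow> numrange_inf A \<le> re_inner u (A u) \<and> re_inner u (A u) \<le> onorm A"
  using effect_numrange_inf_le_re_inner[of A u] effect_re_inner_le_onorm[of A u] by simp

definition approx_eigenvalue :: "('a::real_normed_vector \<Rightarrow> 'a) \<Rightarrow> real \<Rightarrow> bool" where
  "approx_eigenvalue F l \<longleftrightarrow> (\<forall>e>0. \<exists>x. x \<noteq> 0 \<and> norm (F x - l *\<^sub>R x) < e * norm x)"

lemma approx_eigenvalue_unit:
  assumes "bounded_linear F" and "approx_eigenvalue F l" and "0 < e"
  obtains u where "norm u = 1" and "norm (F u - l *\<^sub>R u) < e"
proof -
  interpret F: bounded_linear F by fact
  obtain x where "x \<noteq> 0" and x: "norm (F x - l *\<^sub>R x) < e * norm x"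
    using assms(2,3) by (auto simp: approx_eigenvalue_def)
  have "F (sgn x) - l *\<^sub>R sgn x = (1 / norm x) *\<^sub>R (F x - l *\<^sub>R x)"
    by (simp add: sgn_div_norm F.scaleR scaleR_diff_right divide_inverse mult.commute)
  with x \<open>x \<noteq> 0\<close> have "norm (F (sgn x) - l *\<^sub>R sgn x) < e"
    by (simp add: divide_less_eq mult.commute)
  with \<open>x \<noteq> 0\<close> show ?thesis by (intro that[of "sgn x"]) (simp_all add: norm_sgn)
qed

lemma approx_eigenvalue_abs_le_onorm:
  assumes "bounded_linear F" and "approx_eigenvalue F l"
  shows "\<bar>l\<bar> \<le> onorm F"
proof (rule field_le_epsilon)
  fix e :: real assume "0 < e"
  then obtain x where "x \<noteq> 0" and x: "norm (F x - l *\<^sub>R x) < e * norm x"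
    using assms(2) by (auto simp: approx_eigenvalue_def)
  have "\<bar>l\<bar> * norm x \<le> norm (F x) + norm (F x - l *\<^sub>R x)"
    using norm_triangle_sub[of "l *\<^sub>R x" "F x"] by (simp add: norm_minus_commute)
  also have "\<dots> < (onorm F + e) * norm x"
    using onorm[OF assms(1), of x] x by (simp add: distrib_right)
  finally show "\<bar>l\<bar> \<le> onorm F + e" using \<open>x \<noteq> 0\<close> by simp
qed

lemma approx_eigenvalue_similar:
  fixes C E :: "'a::real_normed_vector \<Rightarrow> 'a"
  assumes C: "bounded_linear C" and C_inv: "bounded_linear (inv C)" and "inj C"
    and "approx_eigenvalue E l"
  shows "approx_eigenvalue (C \<circ> E \<circ> inv C) l"
  unfolding approx_eigenvalue_def
proof (intro allI impI)
  interpret C: bounded_linear C by (rule C)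
  fix e :: real assume "0 < e"
  define c where "c = onorm C * onorm (inv C)"
  have "0 \<le> c" using onorm_pos_le[OF C] onorm_pos_le[OF C_inv] by (simp add: c_def)
  with \<open>0 < e\<close> have "0 < e / (c + 1)" by simp
  with assms(4) obtain x where "x \<noteq> 0" and x: "norm (E x - l *\<^sub>R x) < e / (c + 1) * norm x"
    unfolding approx_eigenvalue_def by blast
  have x_le: "norm x \<le> onorm (inv C) * norm (C x)"
    using onorm[OF C_inv, of "C x"] \<open>inj C\<close> by simp
  with \<open>x \<noteq> 0\<close> have "C x \<noteq> 0" by auto
  have "(C \<circ> E \<circ> inv C) (C x) - l *\<^sub>R C x = C (E x - l *\<^sub>R x)"
    using \<open>inj C\<close> by (simp add: C.diff C.scaleR)
  then have "norm ((C \<circ> E \<circ> inv C) (C x) - l *\<^sub>R C x) \<le> onorm C * norm (E x - l *\<^sub>R x)"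
    using onorm[OF C] by simp
  also have "\<dots> \<le> onorm C * (e / (c + 1) * norm x)"
    using less_imp_le[OF x] onorm_pos_le[OF C] by (rule mult_left_mono)
  also have "\<dots> \<le> onorm C * (e / (c + 1) * (onorm (inv C) * norm (C x)))"
    using x_le onorm_pos_le[OF C] \<open>0 < e / (c + 1)\<close> by (intro mult_left_mono) auto
  also have "\<dots> = c / (c + 1) * e * norm (C x)" by (simp add: c_def)
  also have "\<dots> < e * norm (C x)"
    using \<open>0 \<le> c\<close> \<open>0 < e\<close> \<open>C x \<noteq> 0\<close> by (simp add: divide_less_eq)
  finally show "\<exists>y. y \<noteq> 0 \<and> norm ((C \<circ> E \<circ> inv C) y - l *\<^sub>R y) < e * norm y"
    using \<open>C x \<noteq> 0\<close> by blast
qed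

lemma exists_unit_norm_sq_gt_onorm:
  fixes F :: "'a::real_normed_vector \<Rightarrow> 'b::real_normed_vector"
  assumes F: "bounded_linear F" and "\<exists>x::'a. x \<noteq> 0" and "0 < e"
  shows "\<exists>u. norm u = 1 \<and> (onorm F)\<^sup>2 - e < (norm (F u))\<^sup>2"
proof (rule ccontr)
  interpret F: bounded_linear F by (rule F)
  define r where "r = sqrt ((onorm F)\<^sup>2 - e)"
  assume "\<not> ?thesis"
  then have unit_le: "norm (F u) \<le> r" if "norm u = 1" for u
    using that by (auto simp: not_less real_le_rsqrt r_def)
  from assms(2) obtain u :: 'a where "norm u = 1" by (metis norm_sgn)
  with unit_le have "0 \<le> r" by (meson norm_ge_zero order_trans)
  have "onorm F \<le> r"
  proof (rule onorm_bound[OF \<open>0 \<le> r\<close>])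
    fix x
    show "norm (F x) \<le> r * norm x"
    proof (cases "x = 0")
      case False
      then have "F x = norm x *\<^sub>R F (sgn x)" by (simp add: sgn_div_norm F.scaleR)
      with False unit_le[of "sgn x"] show ?thesis
        by (simp add: norm_sgn mult.commute mult_left_mono)
    qed simp
  qed
  then have "(onorm F)\<^sup>2 \<le> r\<^sup>2" using onorm_pos_le[OF F] by (simp add: power_mono)
  also have "r\<^sup>2 = (onorm F)\<^sup>2 - e" using \<open>0 \<le> r\<close> by (simp add: r_def)
  finally show False using \<open>0 < e\<close> by simp
qed

lemma effect_approx_eigenvalue_onorm:
  fixes E :: "'a::complex_inner \<Rightarrow> 'a"
  assumes E: "is_effect E" and nontrivial: "\<exists>x::'a. x \<noteq> 0"
  shows "approx_eigenvalue E (onorm E)"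
  unfolding approx_eigenvalue_def
proof (intro allI impI)
  fix e :: real assume "0 < e"
  define M where "M = onorm E"
  obtain u where u: "norm u = 1" and big: "M\<^sup>2 - e\<^sup>2 < (norm (E u))\<^sup>2"
    using exists_unit_norm_sq_gt_onorm[OF effect_bounded_linear[OF E] nontrivial, of "e\<^sup>2"] \<open>0 < e\<close>
    by (auto simp: M_def)
  have "(norm (E u - M *\<^sub>R u))\<^sup>2 = (norm (E u))\<^sup>2 - 2 * M * re_inner u (E u) + M\<^sup>2"
    using u by (simp add: norm_diff_scaleR_square)
  also have "\<dots> \<le> M\<^sup>2 - (norm (E u))\<^sup>2"
    using effect_norm_sq_le_onorm[OF E, of u] by (simp add: M_def)
  also have "\<dots> < e\<^sup>2" using big by simp
  finally have "norm (E u - M *\<^sub>R u) < e" using \<open>0 < e\<close> by (simp add: power2_less_imp_less)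
  with u show "\<exists>x. x \<noteq> 0 \<and> norm (E x - onorm E *\<^sub>R x) < e * norm x"
    by (intro exI[of _ u]) (auto simp: M_def)
qed

lemma re_inner_unit_diff_le: "norm u = 1 \<Longrightarrow> \<bar>re_inner u (F u) - l\<bar> \<le> norm (F u - l *\<^sub>R u)"
  using abs_re_inner_le_norm[of u "F u - l *\<^sub>R u"]
  by (simp add: re_inner_diff_right re_inner_scaleR_right re_inner_self)

lemma effect_unit_approx_eigenvector:
  fixes E :: "'a::complex_inner \<Rightarrow> 'a"
  assumes "is_effect E" and "\<exists>x::'a. x \<noteq> 0" and "0 < e"
  obtains u :: 'a where "norm u = 1" and "norm (E u - onorm E *\<^sub>R u) < e"
  using approx_eigenvalue_unit[OF effect_bounded_linear effect_approx_eigenvalue_onorm] assms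
  by blast

lemma onorm_effect_le_of_numrange:
  fixes E :: "'a::complex_inner \<Rightarrow> 'a"
  assumes E: "is_effect E" and nontrivial: "\<exists>x::'a. x \<noteq> 0"
    and bound: "\<And>u. norm u = 1 \<Longrightarrow> re_inner u (E u) \<le> c"
  shows "onorm E \<le> c"
proof (rule field_le_epsilon)
  fix e :: real assume "0 < e"
  then obtain u where "norm u = 1" "norm (E u - onorm E *\<^sub>R u) < e"
    using effect_unit_approx_eigenvector[OF E nontrivial] by blast
  with re_inner_unit_diff_le[of u E "onorm E"] bound[of u] show "onorm E \<le> c + e" by linarith
qed

lemma numrange_inf_ge_of_numrange:
  fixes E :: "'a::complex_inner \<Rightarrow> 'a"
  assumes E: "is_effect E" and nontrivial: "\<exists>x::'a. x \<noteq> 0"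
    and bound: "\<And>u. norm u = 1 \<Longrightarrow> c \<le> re_inner u (E u)"
  shows "c \<le> numrange_inf E"
  using onorm_effect_le_of_numrange[OF effect_complement[OF E] nontrivial, of "1 - c"] bound
  by (simp add: numrange_inf_def complement_op_def re_inner_diff_right re_inner_self)

lemma effect_numrange_inf_le_onorm:
  fixes E :: "'a::complex_inner \<Rightarrow> 'a"
  assumes "is_effect E" and "\<exists>x::'a. x \<noteq> 0"
  shows "numrange_inf E \<le> onorm E"
proof -
  from assms(2) obtain u :: 'a where "norm u = 1" by (metis norm_sgn)
  with effect_re_inner_unit_between[OF assms(1)] show ?thesis by force
qed

lemma effect_approx_numrange_between:
  assumes E: "is_effect E"
    and approx: "\<And>e. 0 < e \<Longrightarrow> \<exists>u. norm u = 1 \<and> \<bar>re_inner u (E u) - c\<bar> < e"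
  shows "numrange_inf E \<le> c \<and> c \<le> onorm E"
proof
  show "numrange_inf E \<le> c"
  proof (rule field_le_epsilon)
    fix e :: real assume "0 < e"
    with approx effect_re_inner_unit_between[OF E] show "numrange_inf E \<le> c + e" by force
  qed
  show "c \<le> onorm E"
  proof (rule field_le_epsilon)
    fix e :: real assume "0 < e"
    with approx effect_re_inner_unit_between[OF E] show "c \<le> onorm E + e" by force
  qed
qed

section \<open>The spectral data of A and A A'\<close>

definition quad :: "real \<Rightarrow> real" where
  "quad t = t * (1 - t)"

definition quad_max :: "real \<Rightarrow> real \<Rightarrow> real" where
  "quad_max m M = (if m \<le> 1/2 \<and> 1/2 \<le> M then 1/4 else max (quad m) (quad M))"

lemma quad_one_minus: "quad (1 - t) = quad t"
  by (simp add: quad_def algebra_simps)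

lemma quad_max_same: "quad_max t t = quad t"
proof (cases "t = 1/2")
  case True
  show ?thesis unfolding True quad_max_def quad_def by simp
qed (auto simp: quad_max_def)

lemma quad_le_quad_max:
  assumes "m \<le> t" and "t \<le> M"
  shows "quad t \<le> quad_max m M"
proof (cases "m \<le> 1/2 \<and> 1/2 \<le> M")
  case True
  have "0 \<le> (t - 1/2)\<^sup>2" by simp
  with True show ?thesis by (simp add: quad_max_def quad_def power2_eq_square algebra_simps)
next
  case False
  with assms have "0 \<le> (M - t) * (1 - M - t) \<or> 0 \<le> (t - m) * (t + m - 1)"
    by (auto intro: mult_nonneg_nonneg)
  then have "quad t \<le> quad M \<or> quad t \<le> quad m" by (auto simp: quad_def algebra_simps)
  with False show ?thesis by (auto simp: quad_max_def)
qed

lemma min_quad_le_affine: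
  assumes "m \<le> t" and "t \<le> M"
  shows "min (quad m) (quad M) \<le> (1 - M - m) * t + M * m"
proof (cases "0 \<le> 1 - M - m")
  case True
  with assms have "(1 - M - m) * m \<le> (1 - M - m) * t" by (intro mult_left_mono)
  then show ?thesis by (simp add: quad_def algebra_simps)
next
  case False
  with assms have "(1 - M - m) * M \<le> (1 - M - m) * t" by (intro mult_left_mono_neg) auto
  then show ?thesis by (simp add: quad_def algebra_simps)
qed

text \<open>For M = onorm A, m = numrange_inf A, N = onorm (A A'), n = numrange_inf (A A'), these
  relate the ends of the spectrum of A A' = quad A to those of A; they are all the argument
  uses about the four numbers.\<close>

definition spectral_constraints :: "real \<Rightarrow> real \<Rightarrow> real \<Rightarrow> real \<Rightarrow> bool" where
  "spectral_constraints M m N n \<longleftrightarrow> 0 \<le> m \<and> m \<le> M \<and> M \<le> 1 \<and>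
     max (quad m) (quad M) \<le> N \<and> N \<le> quad_max m M \<and> n = min (quad m) (quad M)"

lemma re_inner_mult_complement_approx:
  assumes A: "is_effect A" and u: "norm u = 1" and "0 \<le> l" "l \<le> 1"
  shows "\<bar>re_inner u ((A \<circ> complement_op A) u) - quad l\<bar> \<le> 3 * norm (A u - l *\<^sub>R u)"
proof -
  define r where "r = norm (A u - l *\<^sub>R u)"
  have t: "\<bar>re_inner u (A u) - l\<bar> \<le> r" using re_inner_unit_diff_le[OF u] by (simp add: r_def)
  have "\<bar>norm (A u) - l\<bar> \<le> r"
    using norm_triangle_ineq3[of "A u" "l *\<^sub>R u"] u \<open>0 \<le> l\<close> by (simp add: r_def)
  moreover have "\<bar>norm (A u) + l\<bar> \<le> 2"
    using effect_norm_le[OF A, of u] u \<open>0 \<le> l\<close> \<open>l \<le> 1\<close> by (simp add: abs_le_iff)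
  ultimately have "\<bar>norm (A u) - l\<bar> * \<bar>norm (A u) + l\<bar> \<le> r * 2" by (intro mult_mono) auto
  then have "\<bar>(norm (A u))\<^sup>2 - l\<^sup>2\<bar> \<le> 2 * r"
    by (simp add: power2_eq_square algebra_simps flip: abs_mult)
  with t show ?thesis
    unfolding re_inner_effect_mult_complement[OF A] quad_def r_def[symmetric]
    by (simp add: power2_eq_square algebra_simps abs_le_iff)
qed

lemma quad_onorm_between:
  fixes A :: "'a::complex_inner \<Rightarrow> 'a"
  assumes A: "is_effect A" and nontrivial: "\<exists>x::'a. x \<noteq> 0"
  shows "numrange_inf (A \<circ> complement_op A) \<le> quad (onorm A)
    \<and> quad (onorm A) \<le> onorm (A \<circ> complement_op A)"
proof (rule effect_approx_numrange_between[OF effect_mult_complement[OF A]])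
  fix e :: real assume "0 < e"
  then obtain u where u: "norm u = 1" "norm (A u - onorm A *\<^sub>R u) < e / 3"
    using effect_unit_approx_eigenvector[OF A nontrivial, of "e / 3"] by auto
  moreover note re_inner_mult_complement_approx[OF A u(1)
      effect_onorm_nonneg[OF A] effect_onorm_le_1[OF A]]
  ultimately show "\<exists>u. norm u = 1 \<and> \<bar>re_inner u ((A \<circ> complement_op A) u) - quad (onorm A)\<bar> < e"
    by force
qed

lemma quad_numrange_inf_between:
  fixes A :: "'a::complex_inner \<Rightarrow> 'a"
  assumes A: "is_effect A" and nontrivial: "\<exists>x::'a. x \<noteq> 0"
  shows "numrange_inf (A \<circ> complement_op A) \<le> quad (numrange_inf A)
    \<and> quad (numrange_inf A) \<le> onorm (A \<circ> complement_op A)"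
  using quad_onorm_between[OF effect_complement[OF A] nontrivial]
  by (simp add: effect_complement_commute[OF A] numrange_inf_def quad_one_minus)

lemma effect_norm_sq_le_affine:
  fixes A :: "'a::complex_inner \<Rightarrow> 'a"
  assumes A: "is_effect A" and nontrivial: "\<exists>x::'a. x \<noteq> 0"
  defines "M \<equiv> onorm A" and "m \<equiv> numrange_inf A"
  shows "(norm (A x))\<^sup>2 \<le> (M + m) * re_inner x (A x) - M * m * (norm x)\<^sup>2"
proof -
  interpret A: bounded_linear A by (rule effect_bounded_linear[OF A])
  \<comment> \<open>This is the operator inequality (A - m) (M - A) \<ge> 0.\<close>
  have "(norm (A x - m *\<^sub>R x))\<^sup>2 \<le> (M - m) * re_inner x (A x - m *\<^sub>R x)"
  proof (rule positive_operator_norm_sq_le)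
    show "bounded_linear (\<lambda>y. A y - m *\<^sub>R y)"
      by (intro bounded_linear_sub bounded_linear_scaleR_right bounded_linear_ident
          A.bounded_linear)
    show "re_inner (A y - m *\<^sub>R y) z = re_inner y (A z - m *\<^sub>R z)" for y z
      by (simp add: re_inner_diff_left re_inner_diff_right re_inner_scaleR_left
          re_inner_scaleR_right
          effect_symmetric[OF A] re_inner_commute[of y z])
    show "0 \<le> re_inner y (A y - m *\<^sub>R y)" for y
      using effect_numrange_inf_le_re_inner[OF A, of y]
      by (simp add: re_inner_diff_right re_inner_scaleR_right re_inner_self m_def)
    show "re_inner y (A y - m *\<^sub>R y) \<le> (M - m) * (norm y)\<^sup>2" for y
      using effect_re_inner_le_onorm[OF A, of y]
      by (simp add: re_inner_diff_right re_inner_scaleR_right re_inner_self M_def algebra_simps)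
    show "0 \<le> M - m"
      using effect_numrange_inf_le_onorm[OF A nontrivial] by (simp add: M_def m_def)
  qed
  then show ?thesis
    unfolding norm_diff_scaleR_square
    by (simp add: re_inner_diff_right re_inner_scaleR_right re_inner_self power2_eq_square
        algebra_simps)
qed

lemma effect_spectral_constraints:
  fixes A :: "'a::complex_inner \<Rightarrow> 'a"
  assumes A: "is_effect A" and nontrivial: "\<exists>x::'a. x \<noteq> 0"
  defines "M \<equiv> onorm A" and "m \<equiv> numrange_inf A"
  shows "spectral_constraints M m
    (onorm (A \<circ> complement_op A)) (numrange_inf (A \<circ> complement_op A))"
proof -
  have AA: "is_effect (A \<circ> complement_op A)" by (rule effect_mult_complement[OF A])
  have between: "m \<le> re_inner u (A u) \<and> re_inner u (A u) \<le> M" if "norm u = 1" for u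
    using effect_re_inner_unit_between[OF A that] by (simp add: M_def m_def)
  have "onorm (A \<circ> complement_op A) \<le> quad_max m M"
  proof (rule onorm_effect_le_of_numrange[OF AA nontrivial])
    fix u :: 'a assume u: "norm u = 1"
    have "re_inner u (A u) \<le> norm (A u)" using re_inner_le_norm[of u "A u"] u by simp
    moreover have "0 \<le> re_inner u (A u)" by (rule effect_re_inner_nonneg[OF A])
    ultimately have "(re_inner u (A u))\<^sup>2 \<le> (norm (A u))\<^sup>2" by (rule power_mono)
    then have "re_inner u ((A \<circ> complement_op A) u) \<le> quad (re_inner u (A u))"
      unfolding re_inner_effect_mult_complement[OF A]
      by (simp add: quad_def power2_eq_square algebra_simps)
    also have "\<dots> \<le> quad_max m M" using between[OF u] by (simp add: quad_le_quad_max)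
    finally show "re_inner u ((A \<circ> complement_op A) u) \<le> quad_max m M" .
  qed
  moreover have "min (quad m) (quad M) \<le> numrange_inf (A \<circ> complement_op A)"
  proof (rule numrange_inf_ge_of_numrange[OF AA nontrivial])
    fix u :: 'a assume u: "norm u = 1"
    have "min (quad m) (quad M) \<le> (1 - M - m) * re_inner u (A u) + M * m"
      using between[OF u] by (simp add: min_quad_le_affine)
    also have "\<dots> \<le> re_inner u ((A \<circ> complement_op A) u)"
      using effect_norm_sq_le_affine[OF A nontrivial, of u] u
      unfolding re_inner_effect_mult_complement[OF A] by (simp add: M_def m_def algebra_simps)
    finally show "min (quad m) (quad M) \<le> re_inner u ((A \<circ> complement_op A) u)" .
  qed
  moreover have "0 \<le> m" "m \<le> M" "M \<le> 1"
    using effect_numrange_inf_nonneg[OF A] effect_numrange_inf_le_onorm[OF A nontrivial]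
      effect_onorm_le_1[OF A] by (simp_all add: M_def m_def)
  ultimately show ?thesis
    using quad_onorm_between[OF A nontrivial] quad_numrange_inf_between[OF A nontrivial]
    by (auto simp: spectral_constraints_def M_def m_def)
qed

lemma effect_eq_scaleR_of_numrange_inf_eq_onorm:
  fixes A :: "'a::complex_inner \<Rightarrow> 'a"
  assumes A: "is_effect A" and nontrivial: "\<exists>x::'a. x \<noteq> 0" and eq: "numrange_inf A = onorm A"
  shows "A = (\<lambda>x. onorm A *\<^sub>R x)"
proof
  fix x
  have "(norm (A x - onorm A *\<^sub>R x))\<^sup>2 \<le> 0"
    using effect_norm_sq_le_affine[OF A nontrivial, of x] eq
    unfolding norm_diff_scaleR_square by (simp add: power2_eq_square algebra_simps)
  then show "A x = onorm A *\<^sub>R x" by simp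
qed

section \<open>The sharpness formula in spectral variables\<close>

definition spectral_X :: "real \<Rightarrow> real \<Rightarrow> real" where
  "spectral_X M m = M + m - 2 * M * m"

definition spectral_radicand :: "real \<Rightarrow> real \<Rightarrow> real \<Rightarrow> real \<Rightarrow> real" where
  "spectral_radicand M m N n = (spectral_X M m)\<^sup>2 - spectral_X M m + N + n"

definition spectral_S2 :: "real \<Rightarrow> real \<Rightarrow> real \<Rightarrow> real \<Rightarrow> real" where
  "spectral_S2 M m N n = spectral_X M m - sqrt (spectral_radicand M m N n)"

lemma spectral_X_minus_quads:
  "spectral_X M m - quad m - quad M = (M - m)\<^sup>2"
  "spectral_X M m - 1/4 - quad m = (M - m)\<^sup>2 - (M - 1/2)\<^sup>2"
  "spectral_X M m - 1/4 - quad M = (M - m)\<^sup>2 - (m - 1/2)\<^sup>2"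
  by (simp_all add: spectral_X_def quad_def power2_eq_square algebra_simps)

lemma quad_max_add_min_quad_outside:
  assumes "\<not> (m \<le> 1/2 \<and> 1/2 \<le> M)"
  shows "quad_max m M + min (quad m) (quad M) = quad m + quad M"
proof -
  from assms have "quad_max m M = max (quad m) (quad M)" unfolding quad_max_def by (rule if_not_P)
  then show ?thesis by (simp add: max_def min_def)
qed

lemma quad_max_add_min_quad_le:
  assumes "m \<le> M"
  shows "quad_max m M + min (quad m) (quad M) \<le> spectral_X M m"
proof (cases "m \<le> 1/2 \<and> 1/2 \<le> M")
  case True
  then have "(M - 1/2)\<^sup>2 \<le> (M - m)\<^sup>2" by (intro power_mono) auto
  moreover from True have "quad_max m M = 1/4" by (simp add: quad_max_def)
  ultimately show ?thesis
    using spectral_X_minus_quads(2)[of M m] min.cobounded1[of "quad m" "quad M"] by linarith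
next
  case False
  show ?thesis
    using quad_max_add_min_quad_outside[OF False] spectral_X_minus_quads(1)[of M m]
      zero_le_power2[of "M - m"] by linarith
qed

lemma quad_max_add_min_quad_less:
  assumes "m < M"
  shows "quad_max m M + min (quad m) (quad M) < spectral_X M m"
proof (cases "m \<le> 1/2 \<and> 1/2 \<le> M")
  case True
  then have max: "quad_max m M = 1/4" by (simp add: quad_max_def)
  show ?thesis
  proof (cases "m < 1/2")
    case True
    with \<open>m \<le> 1/2 \<and> 1/2 \<le> M\<close> have "(M - 1/2)\<^sup>2 < (M - m)\<^sup>2" by (intro power_strict_mono) auto
    with max spectral_X_minus_quads(2)[of M m] show ?thesis
      using min.cobounded1[of "quad m" "quad M"] by linarith
  next
    case False
    with \<open>m \<le> 1/2 \<and> 1/2 \<le> M\<close> have "(m - 1/2)\<^sup>2 = 0" by simp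
    moreover have "0 < (M - m)\<^sup>2" using assms by simp
    ultimately show ?thesis
      using max spectral_X_minus_quads(3)[of M m] min.cobounded2[of "quad m" "quad M"] by linarith
  qed
next
  case False
  moreover have "0 < (M - m)\<^sup>2" using assms by simp
  ultimately show ?thesis
    using quad_max_add_min_quad_outside[OF False] spectral_X_minus_quads(1)[of M m] by linarith
qed

lemma spectral_X_between:
  assumes "0 \<le> M" "M \<le> 1" "0 \<le> m" "m \<le> 1"
  shows "0 \<le> spectral_X M m \<and> spectral_X M m \<le> 1"
proof -
  have "spectral_X M m = M * (1 - m) + m * (1 - M)"
    and "1 - spectral_X M m = (1 - M) * (1 - m) + M * m"
    by (simp_all add: spectral_X_def algebra_simps)
  moreover have "0 \<le> M * (1 - m) + m * (1 - M)" "0 \<le> (1 - M) * (1 - m) + M * m"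
    using assms by simp_all
  ultimately show ?thesis by auto
qed

lemma spectral_radicand_nonneg:
  assumes "spectral_constraints M m N n"
  shows "0 \<le> spectral_radicand M m N n"
proof -
  \<comment> \<open>With N, n replaced by their lower bounds the radicand factors.\<close>
  have "(spectral_X M m)\<^sup>2 - spectral_X M m + quad m + quad M = 4 * (m * (1 - M)) * (M * (1 - m))"
    by (simp add: spectral_X_def quad_def power2_eq_square algebra_simps)
  moreover have "0 \<le> 4 * (m * (1 - M)) * (M * (1 - m))"
    using assms by (simp add: spectral_constraints_def)
  moreover have "quad m + quad M \<le> N + n"
    using assms by (auto simp: spectral_constraints_def)
  ultimately show ?thesis unfolding spectral_radicand_def by linarith
qed

lemma spectral_radicand_le_X_sq:
  assumes "spectral_constraints M m N n"
  shows "spectral_radicand M m N n \<le> (spectral_X M m)\<^sup>2"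
    and "spectral_radicand M m N n = (spectral_X M m)\<^sup>2 \<longleftrightarrow> m = M"
proof -
  from assms have m_M: "m \<le> M" "N \<le> quad_max m M" "n = min (quad m) (quad M)"
    by (simp_all add: spectral_constraints_def)
  show "spectral_radicand M m N n \<le> (spectral_X M m)\<^sup>2"
    using quad_max_add_min_quad_le[OF m_M(1)] m_M by (simp add: spectral_radicand_def)
  show "spectral_radicand M m N n = (spectral_X M m)\<^sup>2 \<longleftrightarrow> m = M"
  proof
    assume "spectral_radicand M m N n = (spectral_X M m)\<^sup>2"
    then show "m = M"
      using quad_max_add_min_quad_less[of m M] m_M by (force simp: spectral_radicand_def)
  next
    assume "m = M"
    with assms have "N = quad M" "n = quad M"
      by (auto simp: spectral_constraints_def quad_max_same)
    with \<open>m = M\<close> show "spectral_radicand M m N n = (spectral_X M m)\<^sup>2"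
      by (simp add: spectral_radicand_def spectral_X_def quad_def algebra_simps)
  qed
qed

lemma spectral_S2_between:
  assumes "spectral_constraints M m N n"
  shows "0 \<le> spectral_S2 M m N n \<and> spectral_S2 M m N n \<le> 1"
proof -
  have X: "0 \<le> spectral_X M m" "spectral_X M m \<le> 1"
    using assms spectral_X_between[of M m] by (auto simp: spectral_constraints_def)
  have "sqrt (spectral_radicand M m N n) \<le> spectral_X M m"
    using spectral_radicand_le_X_sq(1)[OF assms] X(1) real_sqrt_le_iff
    by (metis real_sqrt_abs abs_of_nonneg)
  with X real_sqrt_ge_zero[OF spectral_radicand_nonneg[OF assms]] show ?thesis
    unfolding spectral_S2_def by linarith
qed

lemma spectral_S2_eq_0_iff:
  assumes "spectral_constraints M m N n"
  shows "spectral_S2 M m N n = 0 \<longleftrightarrow> m = M"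
proof -
  have "0 \<le> spectral_X M m"
    using assms spectral_X_between[of M m] by (auto simp: spectral_constraints_def)
  then have "spectral_S2 M m N n = 0 \<longleftrightarrow> spectral_radicand M m N n = (spectral_X M m)\<^sup>2"
    using spectral_radicand_nonneg[OF assms] by (auto simp: spectral_S2_def)
  with spectral_radicand_le_X_sq(2)[OF assms] show ?thesis by simp
qed

lemma spectral_S2_eq_1_iff:
  assumes "spectral_constraints M m N n"
  shows "spectral_S2 M m N n = 1 \<longleftrightarrow> m = 0 \<and> M = 1 \<and> N = 0"
proof
  from assms have m_M: "0 \<le> m" "m \<le> M" "M \<le> 1" "n = min (quad m) (quad M)"
    by (simp_all add: spectral_constraints_def)
  assume S: "spectral_S2 M m N n = 1"
  have "spectral_X M m \<le> 1" using spectral_X_between[of M m] m_M by simp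
  moreover have "0 \<le> sqrt (spectral_radicand M m N n)"
    using spectral_radicand_nonneg[OF assms] by simp
  ultimately have X: "spectral_X M m = 1" and "sqrt (spectral_radicand M m N n) = 0"
    using S unfolding spectral_S2_def by linarith+
  then have R: "spectral_radicand M m N n = 0" by simp
  have "(1 - M) * (1 - m) + M * m = 0" using X by (simp add: spectral_X_def algebra_simps)
  moreover have "0 \<le> (1 - M) * (1 - m)" "0 \<le> M * m" using m_M by simp_all
  ultimately have "M = 1 \<and> m = 0" using m_M by (auto simp: add_nonneg_eq_0_iff)
  with R X m_M show "m = 0 \<and> M = 1 \<and> N = 0" by (simp add: spectral_radicand_def quad_def)
next
  assume "m = 0 \<and> M = 1 \<and> N = 0"
  with assms show "spectral_S2 M m N n = 1"
    by (simp add: spectral_constraints_def spectral_S2_def spectral_radicand_def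
        spectral_X_def quad_def)
qed

lemma abs_sqrt_diff_le: "0 \<le> a \<Longrightarrow> 0 \<le> b \<Longrightarrow> \<bar>sqrt a - sqrt b\<bar> \<le> sqrt \<bar>a - b\<bar>"
proof -
  have "sqrt x \<le> sqrt y + sqrt \<bar>x - y\<bar>" if "0 \<le> x" "0 \<le> y" for x y :: real
  proof -
    have "sqrt x \<le> sqrt (y + \<bar>x - y\<bar>)" by (rule real_sqrt_le_mono) linarith
    also have "\<dots> \<le> sqrt y + sqrt \<bar>x - y\<bar>" using that by (intro sqrt_add_le_add_sqrt) auto
    finally show ?thesis .
  qed
  then show "0 \<le> a \<Longrightarrow> 0 \<le> b \<Longrightarrow> ?thesis" by (smt (verit) abs_minus_commute)
qed

lemma spectral_S2_diff_le:
  assumes "0 \<le> M" "M \<le> 1" "0 \<le> m" "m \<le> 1" "0 \<le> M'" "M' \<le> 1" "0 \<le> m'" "m' \<le> 1"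
    and "\<bar>M' - M\<bar> \<le> d" "\<bar>m' - m\<bar> \<le> d" "\<bar>N' - N\<bar> \<le> 3 * d" "\<bar>n' - n\<bar> \<le> 3 * d"
    and "0 \<le> spectral_radicand M m N n" "0 \<le> spectral_radicand M' m' N' n'"
  shows "\<bar>spectral_S2 M' m' N' n' - spectral_S2 M m N n\<bar> \<le> 2 * d + sqrt (12 * d)"
proof -
  define X where "X = spectral_X M m"
  define X' where "X' = spectral_X M' m'"
  have "X' - X = (M' - M) * (1 - 2 * m') + (m' - m) * (1 - 2 * M)"
    by (simp add: X_def X'_def spectral_X_def algebra_simps)
  moreover have "\<bar>1 - 2 * m'\<bar> \<le> 1" "\<bar>1 - 2 * M\<bar> \<le> 1" using assms by auto
  then have "\<bar>(M' - M) * (1 - 2 * m')\<bar> \<le> \<bar>M' - M\<bar>" "\<bar>(m' - m) * (1 - 2 * M)\<bar> \<le> \<bar>m' - m\<bar>"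
    by (simp_all add: abs_mult mult_left_le)
  ultimately have dX: "\<bar>X' - X\<bar> \<le> 2 * d" using assms(9,10) by linarith
  have X: "0 \<le> X" "X \<le> 1" "0 \<le> X'" "X' \<le> 1"
    using spectral_X_between[of M m] spectral_X_between[of M' m'] assms by (auto simp: X_def X'_def)
  have "\<bar>X'\<^sup>2 - X\<^sup>2\<bar> = \<bar>X' - X\<bar> * \<bar>X' + X\<bar>"
    by (simp add: power2_eq_square algebra_simps flip: abs_mult)
  also have "\<dots> \<le> (2 * d) * 2" using dX X by (intro mult_mono) auto
  finally have "\<bar>X'\<^sup>2 - X\<^sup>2\<bar> \<le> 4 * d" by simp
  with dX assms(11,12) have "\<bar>spectral_radicand M' m' N' n' - spectral_radicand M m N n\<bar> \<le> 12 * d"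
    unfolding spectral_radicand_def X_def[symmetric] X'_def[symmetric] by linarith
  then have "\<bar>sqrt (spectral_radicand M' m' N' n') - sqrt (spectral_radicand M m N n)\<bar>
      \<le> sqrt (12 * d)"
    using abs_sqrt_diff_le[OF assms(14,13)] by (meson order_trans real_sqrt_le_mono)
  with dX show ?thesis unfolding spectral_S2_def X_def[symmetric] X'_def[symmetric] by linarith
qed

section \<open>Properties of S2\<close>

lemma X_fun_eq_spectral_X: "X_fun A = spectral_X (onorm A) (numrange_inf A)"
  by (simp add: X_fun_def spectral_X_def numrange_inf_def algebra_simps)

lemma Y_fun_eq:
  "Y_fun A = X_fun A - onorm (A \<circ> complement_op A) - numrange_inf (A \<circ> complement_op A)"
  by (simp add: X_fun_def Y_fun_def numrange_inf_def)

lemma X_fun_radicand_eq: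
  "(X_fun A)\<^sup>2 - Y_fun A = spectral_radicand (onorm A) (numrange_inf A)
     (onorm (A \<circ> complement_op A)) (numrange_inf (A \<circ> complement_op A))"
  by (simp add: Y_fun_eq spectral_radicand_def X_fun_eq_spectral_X)

lemma S2_eq_spectral_S2:
  "S2 A = spectral_S2 (onorm A) (numrange_inf A)
     (onorm (A \<circ> complement_op A)) (numrange_inf (A \<circ> complement_op A))"
  unfolding S2_def spectral_S2_def X_fun_radicand_eq[symmetric] X_fun_eq_spectral_X ..

lemma S2_trivial_space:
  fixes A :: "'a::complex_inner \<Rightarrow> 'a"
  assumes "\<not> (\<exists>x::'a. x \<noteq> 0)"
  shows "S2 A = 0" and "(X_fun A)\<^sup>2 - Y_fun A = 1"
proof -
  have "onorm F = 0" for F :: "'a \<Rightarrow> 'a"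
  proof -
    have "F = (\<lambda>x. 0)" using assms by auto
    then show ?thesis by (simp add: onorm_zero)
  qed
  then show "S2 A = 0" and "(X_fun A)\<^sup>2 - Y_fun A = 1"
    by (simp_all add: S2_def X_fun_def Y_fun_def)
qed

lemma X_fun_radicand_nonneg:
  fixes A :: "'a::complex_inner \<Rightarrow> 'a"
  assumes "is_effect A"
  shows "0 \<le> (X_fun A)\<^sup>2 - Y_fun A"
proof (cases "\<exists>x::'a. x \<noteq> 0")
  case True
  with assms show ?thesis
    by (simp add: X_fun_radicand_eq spectral_radicand_nonneg effect_spectral_constraints)
qed (simp add: S2_trivial_space)

lemma S2_between:
  fixes A :: "'a::complex_inner \<Rightarrow> 'a"
  assumes "is_effect A"
  shows "0 \<le> S2 A \<and> S2 A \<le> 1"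
proof (cases "\<exists>x::'a. x \<noteq> 0")
  case True
  with assms show ?thesis
    by (simp add: S2_eq_spectral_S2 spectral_S2_between effect_spectral_constraints)
qed (simp add: S2_trivial_space)

lemma S2_eq_0_iff:
  fixes A :: "'a::complex_inner \<Rightarrow> 'a"
  assumes A: "is_effect A"
  shows "S2 A = 0 \<longleftrightarrow> trivial_effect A"
proof (cases "\<exists>x::'a. x \<noteq> 0")
  case nontrivial: True
  have "S2 A = 0 \<longleftrightarrow> numrange_inf A = onorm A"
    using spectral_S2_eq_0_iff[OF effect_spectral_constraints[OF A nontrivial]]
    by (simp add: S2_eq_spectral_S2)
  also have "\<dots> \<longleftrightarrow> trivial_effect A"
  proof
    assume "numrange_inf A = onorm A"
    with effect_eq_scaleR_of_numrange_inf_eq_onorm[OF A nontrivial] show "trivial_effect A"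
      using effect_onorm_nonneg[OF A] effect_onorm_le_1[OF A] by (auto simp: trivial_effect_def)
  next
    assume "trivial_effect A"
    then obtain l where "A = (\<lambda>x. l *\<^sub>R x)" by (auto simp: trivial_effect_def)
    then have "re_inner u (A u) = l" if "norm u = 1" for u
      using that by (simp add: re_inner_scaleR_right re_inner_self)
    then have "onorm A \<le> l" and "l \<le> numrange_inf A"
      by (simp_all add: onorm_effect_le_of_numrange[OF A nontrivial]
          numrange_inf_ge_of_numrange[OF A nontrivial])
    with effect_numrange_inf_le_onorm[OF A nontrivial] show "numrange_inf A = onorm A" by simp
  qed
  finally show ?thesis .
next
  case False
  then have "A = (\<lambda>x. 0 *\<^sub>R x)" by auto
  then have "trivial_effect A"
    unfolding trivial_effect_def by (intro exI[of _ 0]) (simp add: fun_eq_iff)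
  with False show ?thesis by (simp add: S2_trivial_space)
qed

lemma idempotent_effect_onorm_eq_1_iff:
  assumes P: "is_effect P" and "P \<circ> P = P"
  shows "onorm P = 1 \<longleftrightarrow> P \<noteq> (\<lambda>x. 0)"
proof
  assume "P \<noteq> (\<lambda>x. 0)"
  then obtain x where "P x \<noteq> 0" by auto
  have "norm (P x) = norm (P (P x))" using \<open>P \<circ> P = P\<close> by (metis comp_apply)
  also have "\<dots> \<le> onorm P * norm (P x)" by (rule onorm[OF effect_bounded_linear[OF P]])
  finally have "1 \<le> onorm P" using \<open>P x \<noteq> 0\<close> by simp
  with effect_onorm_le_1[OF P] show "onorm P = 1" by simp
qed (auto simp: onorm_zero)

lemma effect_mult_complement_eq_0_iff:
  "is_effect A \<Longrightarrow> A \<circ> complement_op A = (\<lambda>x. 0) \<longleftrightarrow> A \<circ> A = A"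
  by (auto simp: fun_eq_iff complement_op_def effect_diff)

lemma S2_eq_1_iff:
  fixes A :: "'a::complex_inner \<Rightarrow> 'a"
  assumes A: "is_effect A"
  shows "S2 A = 1 \<longleftrightarrow> nontrivial_projection A"
proof (cases "\<exists>x::'a. x \<noteq> 0")
  case nontrivial: True
  have AA: "is_effect (A \<circ> complement_op A)" by (rule effect_mult_complement[OF A])
  have "S2 A = 1 \<longleftrightarrow> onorm (complement_op A) = 1 \<and> onorm A = 1 \<and> A \<circ> A = A"
    using spectral_S2_eq_1_iff[OF effect_spectral_constraints[OF A nontrivial]]
      onorm_eq_0[OF effect_bounded_linear[OF AA]] effect_mult_complement_eq_0_iff[OF A]
    by (auto simp: S2_eq_spectral_S2 numrange_inf_def fun_eq_iff)
  also have "\<dots> \<longleftrightarrow> A \<noteq> id \<and> A \<noteq> (\<lambda>x. 0) \<and> A \<circ> A = A"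
  proof -
    have "complement_op A \<circ> complement_op A = complement_op A" if "A \<circ> A = A"
      using that by (simp add: fun_eq_iff complement_op_def effect_diff[OF A])
    moreover have "complement_op A = (\<lambda>x. 0) \<longleftrightarrow> A = id"
      by (auto simp: fun_eq_iff complement_op_def)
    ultimately show ?thesis
      using idempotent_effect_onorm_eq_1_iff[OF A]
        idempotent_effect_onorm_eq_1_iff[OF effect_complement[OF A]]
      by blast
  qed
  finally show ?thesis
    using A by (auto simp: nontrivial_projection_def is_projection_def is_effect_def)
next
  case False
  then have "A = (\<lambda>x. 0)" by auto
  with False show ?thesis by (simp add: S2_trivial_space nontrivial_projection_def)
qed

lemma S2_complement:
  assumes "is_effect A"
  shows "S2 (complement_op A) = S2 A"
  unfolding S2_def X_fun_def Y_fun_def complement_complement effect_complement_commute[OF assms]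
  by (simp add: algebra_simps)

lemma onorm_effect_le_similar:
  fixes C E :: "'a::complex_inner \<Rightarrow> 'a"
  assumes "is_effect E" and "\<exists>x::'a. x \<noteq> 0"
    and "bounded_linear C" and "bounded_linear (inv C)" and "inj C"
    and "bounded_linear (C \<circ> E \<circ> inv C)"
  shows "onorm E \<le> onorm (C \<circ> E \<circ> inv C)"
  using approx_eigenvalue_abs_le_onorm[OF assms(6)
      approx_eigenvalue_similar[OF assms(3-5) effect_approx_eigenvalue_onorm[OF assms(1,2)]]]
  by simp

lemma onorm_similar_effect:
  fixes C E :: "'a::complex_inner \<Rightarrow> 'a"
  assumes E: "is_effect E" and F: "is_effect (C \<circ> E \<circ> inv C)" and C: "invertible_op C"
    and nontrivial: "\<exists>x::'a. x \<noteq> 0"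
  shows "onorm (C \<circ> E \<circ> inv C) = onorm E"
proof -
  have C_bl: "bounded_linear C" "bounded_linear (inv C)" and "bij C"
    using C by (auto simp: invertible_op_def bounded_clinear_def)
  have "onorm E \<le> onorm (C \<circ> E \<circ> inv C)"
    using \<open>bij C\<close> by (intro onorm_effect_le_similar E nontrivial C_bl effect_bounded_linear F)
      (simp add: bij_is_inj)
  moreover have "onorm (C \<circ> E \<circ> inv C) \<le> onorm (inv C \<circ> (C \<circ> E \<circ> inv C) \<circ> inv (inv C))"
    using \<open>bij C\<close> C_bl E
    by (intro onorm_effect_le_similar F nontrivial)
      (simp_all add: inv_inv_eq bij_is_inj bij_imp_bij_inv effect_bounded_linear o_def)
  moreover have "inv C \<circ> (C \<circ> E \<circ> inv C) \<circ> inv (inv C) = E"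
    using \<open>bij C\<close> by (simp add: fun_eq_iff inv_inv_eq bij_is_inj)
  ultimately show ?thesis by simp
qed

lemma complement_similar:
  assumes "invertible_op C"
  shows "complement_op (C \<circ> A \<circ> inv C) = C \<circ> complement_op A \<circ> inv C"
proof -
  have "bounded_linear C" "surj C"
    using assms by (auto simp: invertible_op_def bounded_clinear_def bij_is_surj)
  then show ?thesis
    by (simp add: fun_eq_iff complement_op_def linear_diff bounded_linear.linear surj_f_inv_f)
qed

lemma mult_complement_similar:
  assumes "invertible_op C"
  shows "(C \<circ> A \<circ> inv C) \<circ> complement_op (C \<circ> A \<circ> inv C) = C \<circ> (A \<circ> complement_op A) \<circ> inv C"
  using assms by (simp add: complement_similar fun_eq_iff invertible_op_def bij_is_inj)

lemma numrange_inf_similar_effect: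
  fixes C E :: "'a::complex_inner \<Rightarrow> 'a"
  assumes "is_effect E" and "is_effect (C \<circ> E \<circ> inv C)" and "invertible_op C"
    and "\<exists>x::'a. x \<noteq> 0"
  shows "numrange_inf (C \<circ> E \<circ> inv C) = numrange_inf E"
proof -
  have "is_effect (C \<circ> complement_op E \<circ> inv C)"
    using effect_complement[OF assms(2)] by (simp add: complement_similar[OF assms(3)])
  from onorm_similar_effect[OF effect_complement[OF assms(1)] this assms(3,4)] show ?thesis
    by (simp add: numrange_inf_def complement_similar[OF assms(3)])
qed

lemma S2_similar:
  fixes A C :: "'a::complex_inner \<Rightarrow> 'a"
  assumes A: "is_effect A" and C: "invertible_op C" and B: "is_effect (C \<circ> A \<circ> inv C)"
  shows "S2 (C \<circ> A \<circ> inv C) = S2 A"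
proof (cases "\<exists>x::'a. x \<noteq> 0")
  case nontrivial: True
  have "is_effect (C \<circ> (A \<circ> complement_op A) \<circ> inv C)"
    using effect_mult_complement[OF B] by (simp add: mult_complement_similar[OF C])
  then show ?thesis
    using onorm_similar_effect[OF A B C nontrivial] numrange_inf_similar_effect[OF A B C nontrivial]
      onorm_similar_effect[OF effect_mult_complement[OF A] _ C nontrivial]
      numrange_inf_similar_effect[OF effect_mult_complement[OF A] _ C nontrivial]
    by (simp add: S2_eq_spectral_S2 mult_complement_similar[OF C])
next
  case False
  have "C \<circ> A \<circ> inv C = A" by (rule ext) (use False in metis)
  then show ?thesis by simp
qed

lemma onorm_diff_le:
  fixes F G :: "'a::real_normed_vector \<Rightarrow> 'b::real_normed_vector"
  assumes "bounded_linear F" and "bounded_linear G"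
    and bound: "\<And>x. norm (F x - G x) \<le> c * norm x" and "0 \<le> c"
  shows "\<bar>onorm F - onorm G\<bar> \<le> c"
proof -
  have le: "onorm F' \<le> c + onorm G'"
    if F': "bounded_linear F'" and G': "bounded_linear G'"
      and "\<And>x. norm (F' x - G' x) \<le> c * norm x" for F' G' :: "'a \<Rightarrow> 'b"
  proof -
    have "onorm F' = onorm (\<lambda>x. (F' x - G' x) + G' x)" by simp
    also have "\<dots> \<le> onorm (\<lambda>x. F' x - G' x) + onorm G'"
      by (intro onorm_triangle bounded_linear_sub F' G')
    also have "onorm (\<lambda>x. F' x - G' x) \<le> c" by (rule onorm_bound[OF \<open>0 \<le> c\<close> that(3)])
    finally show ?thesis by simp
  qed
  have "onorm F \<le> c + onorm G" by (rule le[OF assms(1,2) bound])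
  moreover have "onorm G \<le> c + onorm F"
    by (rule le[OF assms(2,1)]) (simp add: norm_minus_commute bound)
  ultimately show ?thesis by linarith
qed

lemma effect_mult_complement_diff_le:
  assumes A: "is_effect A" and B: "is_effect B"
    and bound: "\<And>x. norm (B x - A x) \<le> d * norm x" and "0 \<le> d"
  shows "norm ((B \<circ> complement_op B) x - (A \<circ> complement_op A) x) \<le> 3 * d * norm x"
proof -
  have "(B \<circ> complement_op B) x - (A \<circ> complement_op A) x
      = (B x - A x) - B (B x - A x) - (B (A x) - A (A x))"
    by (simp add: complement_op_def effect_diff[OF A] effect_diff[OF B] algebra_simps)
  also have "norm \<dots> \<le> norm (B x - A x) + norm (B (B x - A x)) + norm (B (A x) - A (A x))"
    by (meson add_mono norm_triangle_ineq4 order_trans order_refl)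
  also have "\<dots> \<le> d * norm x + d * norm x + d * norm x"
    using bound[of x] bound[of "A x"] effect_norm_le[OF B, of "B x - A x"]
      mult_left_mono[OF effect_norm_le[OF A, of x] \<open>0 \<le> d\<close>]
    by linarith
  finally show ?thesis by simp
qed

lemma S2_diff_le:
  fixes A B :: "'a::complex_inner \<Rightarrow> 'a"
  assumes A: "is_effect A" and B: "is_effect B"
  defines "d \<equiv> onorm (\<lambda>x. B x - A x)"
  shows "\<bar>S2 B - S2 A\<bar> \<le> 2 * d + sqrt (12 * d)"
proof -
  have bl: "bounded_linear (\<lambda>x. B x - A x)" by (intro bounded_linear_sub effect_bounded_linear A B)
  have d: "0 \<le> d" "\<And>x. norm (B x - A x) \<le> d * norm x"
    using onorm_pos_le[OF bl] onorm[OF bl] by (simp_all add: d_def)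
  have AA: "is_effect (A \<circ> complement_op A)" and BB: "is_effect (B \<circ> complement_op B)"
    using A B by (simp_all add: effect_mult_complement)
  have AA_bound: "norm ((B \<circ> complement_op B) x - (A \<circ> complement_op A) x) \<le> (3 * d) * norm x" for x
    using effect_mult_complement_diff_le[OF A B d(2) d(1)] by simp
  have complement_bound: "norm (complement_op F x - complement_op E x) \<le> c * norm x"
    if "\<And>x. norm (F x - E x) \<le> c * norm x" for E F :: "'a \<Rightarrow> 'a" and c x
    using that[of x] by (simp add: complement_op_def norm_minus_commute)
  have "\<bar>onorm B - onorm A\<bar> \<le> d"
    by (intro onorm_diff_le effect_bounded_linear A B d)
  moreover have "\<bar>numrange_inf B - numrange_inf A\<bar> \<le> d"
    using onorm_diff_le[OF effect_bounded_linear[OF effect_complement[OF B]]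
        effect_bounded_linear[OF effect_complement[OF A]] complement_bound[OF d(2)] d(1)]
    by (simp add: numrange_inf_def)
  moreover have "\<bar>onorm (B \<circ> complement_op B) - onorm (A \<circ> complement_op A)\<bar> \<le> 3 * d"
    using d(1) by (intro onorm_diff_le effect_bounded_linear AA BB AA_bound) simp
  moreover have "\<bar>numrange_inf (B \<circ> complement_op B) - numrange_inf (A \<circ> complement_op A)\<bar> \<le> 3 * d"
    using onorm_diff_le[OF effect_bounded_linear[OF effect_complement[OF BB]]
        effect_bounded_linear[OF effect_complement[OF AA]] complement_bound[OF AA_bound]] d(1)
    by (simp add: numrange_inf_def comp_def abs_minus_commute)
  ultimately show ?thesis
    unfolding S2_eq_spectral_S2
    using A B X_fun_radicand_nonneg[OF A] X_fun_radicand_nonneg[OF B]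
    by (intro spectral_S2_diff_le)
      (simp_all add: effect_onorm_nonneg effect_onorm_le_1 effect_numrange_inf_nonneg
        effect_numrange_inf_le_1 X_fun_radicand_eq)
qed

lemma S2_continuous:
  fixes A :: "'a::complex_inner \<Rightarrow> 'a"
  assumes A: "is_effect A" and "0 < e"
  shows "\<exists>d>0. \<forall>B\<in>effects. onorm (\<lambda>x. B x - A x) < d \<longrightarrow> \<bar>S2 B - S2 A\<bar> < e"
proof (intro exI[of _ "min (e / 4) (e\<^sup>2 / 48)"] conjI ballI impI)
  show "0 < min (e / 4) (e\<^sup>2 / 48)" using \<open>0 < e\<close> by simp
  fix B assume "B \<in> effects" and small: "onorm (\<lambda>x. B x - A x) < min (e / 4) (e\<^sup>2 / 48)"
  define d where "d = onorm (\<lambda>x. B x - A x)"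
  have "12 * d < (e / 2)\<^sup>2" using small by (simp add: d_def power_divide)
  then have "sqrt (12 * d) < e / 2" using real_sqrt_less_mono \<open>0 < e\<close> by fastforce
  moreover have "2 * d < e / 2" using small by (simp add: d_def)
  moreover have "\<bar>S2 B - S2 A\<bar> \<le> 2 * d + sqrt (12 * d)"
    using S2_diff_le[OF A] \<open>B \<in> effects\<close> by (simp add: effects_def d_def)
  ultimately show "\<bar>S2 B - S2 A\<bar> < e" by linarith
qed

theorem mainTheorem11:
  assumes "separable_hspace TYPE('a::{complex_inner, complete_space})"
  shows "(\<forall>A::'a \<Rightarrow> 'a. A \<in> effects \<longrightarrow> 0 \<le> (X_fun A)\<^sup>2 - Y_fun A)
         \<and> sharpness_measure (S2 :: ('a \<Rightarrow> 'a) \<Rightarrow> real)"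
  unfolding sharpness_measure_def effects_def
  using X_fun_radicand_nonneg S2_between S2_eq_0_iff S2_eq_1_iff S2_complement effect_complement
    S2_similar S2_continuous[unfolded effects_def]
  by (auto simp del: mem_Collect_eq)

end
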